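(* Let $\Gamma$ be a primitive strongly regular graph with $v$ vertices, valency $k$, eigenvalues $k > e^+ > 0 > e^-$, where the multiplicity $m^-$ of $e^-$ satisfies $ve^- = m^-(e^- - k)$. If $\Gamma$ has $m^-+1$ Delsarte cocliques, then a symmetric $2$-$(\tilde v, \tilde k, c)$ design exists, where $\tilde v = \frac{(e^+)^2+ e^+e^-+e^+ - (e^-)^2}{(e^+)^2 + e^-}$, $\tilde k = \frac{(e^-+1)e^+}{(e^+)^2 + e^-}$ and $c = \frac{-(e^+)^2 + e^+}{(e^+)^2 + e^-}$, and $e^+ + 1$ divides $2c+4$.
   Context: A strongly regular graph has $v$ vertices, is $k$-regular, and the number of common neighbours of two distinct vertices depends only on whether they are adjacent; its adjacency matrix has eigenvalues $k \ge e^+ \ge 0 > e^-$, and $m^-$ is the multiplicity of $e^-$. Primitive means the graph and its complement are connected. A Delsarte coclique is a set of pairwise non-adjacent vertices of size $\frac{ve^-}{e^- - k}$. A symmetric $2$-$(\tilde v,\tilde k,c)$ design is a family of $\tilde k$-subsets (blocks) of a $\tilde v$-set such that every pair of distinct points lies in exactly $c$ blocks and any two distinct blocks meet in a constant number of points. *)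

theory Defs
  imports "HOL-Analysis.Analysis"
begin

definition simple_graph :: "('v \<Rightarrow> 'v \<Rightarrow> bool) \<Rightarrow> bool" where
  "simple_graph adj \<longleftrightarrow> (\<forall>x y. adj x y \<longrightarrow> adj y x) \<and> (\<forall>x. \<not> adj x x)"

definition complement_graph :: "('v \<Rightarrow> 'v \<Rightarrow> bool) \<Rightarrow> 'v \<Rightarrow> 'v \<Rightarrow> bool" where
  "complement_graph adj x y \<longleftrightarrow> x \<noteq> y \<and> \<not> adj x y"

definition graph_connected :: "('v \<Rightarrow> 'v \<Rightarrow> bool) \<Rightarrow> bool" where
  "graph_connected adj \<longleftrightarrow> (\<forall>x y. (x, y) \<in> {(a, b). adj a b}\<^sup>*)"

definition strongly_regular :: "('v::finite \<Rightarrow> 'v \<Rightarrow> bool) \<Rightarrow> nat \<Rightarrow> bool" where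
  "strongly_regular adj k \<longleftrightarrow> simple_graph adj \<and>
     (\<forall>x. card {y. adj x y} = k) \<and>
     (\<exists>lam mu :: nat. \<forall>x y. x \<noteq> y \<longrightarrow>
        card {z. adj x z \<and> adj y z} = (if adj x y then lam else mu))"

definition primitive :: "('v \<Rightarrow> 'v \<Rightarrow> bool) \<Rightarrow> bool" where
  "primitive adj \<longleftrightarrow> graph_connected adj \<and> graph_connected (complement_graph adj)"

definition adj_matrix :: "('v::finite \<Rightarrow> 'v \<Rightarrow> bool) \<Rightarrow> real^'v^'v" where
  "adj_matrix adj = (\<chi> i j. if adj i j then 1 else 0)"

definition is_eigenvalue :: "real^'n^'n \<Rightarrow> real \<Rightarrow> bool" where
  "is_eigenvalue A e \<longleftrightarrow> (\<exists>x. x \<noteq> 0 \<and> A *v x = e *\<^sub>R x)"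

text \<open>Multiplicity of an eigenvalue (the matrices considered are symmetric, so the
  geometric multiplicity, i.e. the dimension of the eigenspace, is the multiplicity).\<close>

definition eig_multiplicity :: "real^'n^'n \<Rightarrow> real \<Rightarrow> nat" where
  "eig_multiplicity A e = dim {x. A *v x = e *\<^sub>R x}"

definition coclique :: "('v \<Rightarrow> 'v \<Rightarrow> bool) \<Rightarrow> 'v set \<Rightarrow> bool" where
  "coclique adj C \<longleftrightarrow> (\<forall>x\<in>C. \<forall>y\<in>C. \<not> adj x y)"

definition delsarte_coclique ::
  "('v::finite \<Rightarrow> 'v \<Rightarrow> bool) \<Rightarrow> nat \<Rightarrow> real \<Rightarrow> 'v set \<Rightarrow> bool" where
  "delsarte_coclique adj k em C \<longleftrightarrow> coclique adj C \<and>
     real (card C) = real CARD('v) * em / (em - real k)"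

definition symmetric_design :: "nat \<Rightarrow> nat \<Rightarrow> nat \<Rightarrow> nat set set \<Rightarrow> bool" where
  "symmetric_design v k c B \<longleftrightarrow>
     (\<forall>b\<in>B. b \<subseteq> {..<v} \<and> card b = k) \<and>
     (\<forall>x<v. \<forall>y<v. x \<noteq> y \<longrightarrow> card {b\<in>B. x \<in> b \<and> y \<in> b} = c) \<and>
     (\<exists>l. \<forall>b1\<in>B. \<forall>b2\<in>B. b1 \<noteq> b2 \<longrightarrow> card (b1 \<inter> b2) = l)"

end

theory Submission
  imports Defs
begin

text \<open>The centred indicator vectors \<open>v 1\<^sub>C - m 1\<close> of the \<open>m + 1\<close> Delsarte cocliques \<open>C\<close> lie in
  the \<open>m\<close>-dimensional \<open>e\<^sup>-\<close>-eigenspace. For one coclique \<open>C\<close>, the projections of the unit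
  vectors \<open>e\<^sub>y\<close> (\<open>y \<in> C\<close>) onto that eigenspace form a basis, so inner products of eigenvectors
  are determined by their restrictions to \<open>C\<close>. Applied to centred indicators, this shows that
  two cocliques always meet in the same number \<open>p\<close> of vertices and three in the same number
  \<open>l\<close>, while the singular Gram matrix of the \<open>m + 1\<close> vectors determines \<open>p\<close>. Fixing a coclique
  \<open>C\<^sub>0\<close>, the sets \<open>C\<^sub>0 \<inter> D\<close> (\<open>D \<noteq> C\<^sub>0\<close>) form a square design on \<open>C\<^sub>0\<close> with block size \<open>p\<close> and
  constant block intersections \<open>l\<close>; a variance count shows that any two points lie in exactly
  \<open>l\<close> blocks. The parameter equations, solved in terms of \<open>e\<^sup>+\<close> and \<open>e\<^sup>-\<close>, give the formulas,
  and \<open>e\<^sup>-\<close> is an integer because \<open>-e\<^sup>-\<close> counts the neighbours of a vertex in a coclique.\<close>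

lemma independent_family_spans:
  fixes h :: "'i \<Rightarrow> 'a::euclidean_space"
  assumes "finite I" and "card I = dim V" and "h ` I \<subseteq> V"
    and indep: "\<And>c. (\<Sum>i\<in>I. c i *\<^sub>R h i) = 0 \<Longrightarrow> \<forall>i\<in>I. c i = 0"
    and "u \<in> V"
  shows "\<exists>c. u = (\<Sum>i\<in>I. c i *\<^sub>R h i)"
proof -
  have inj: "inj_on h I"
  proof (rule inj_onI, rule ccontr)
    fix i j assume ij: "i \<in> I" "j \<in> I" "h i = h j" "i \<noteq> j"
    let ?c = "\<lambda>l. if l = i then 1 else if l = j then -1 else (0::real)"
    have "(\<Sum>l\<in>I. ?c l *\<^sub>R h l) = (\<Sum>l\<in>I. (if l = i then h l else 0) - (if l = j then h l else 0))"
      using ij by (intro sum.cong) auto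
    also have "\<dots> = 0" using ij \<open>finite I\<close> by (simp add: sum_subtractf)
    finally show False using indep[of ?c] ij by auto
  qed
  have "independent (h ` I)"
    unfolding independent_explicit
  proof (intro conjI allI impI ballI)
    show "finite (h ` I)" using \<open>finite I\<close> by simp
    fix c w assume "(\<Sum>v\<in>h ` I. c v *\<^sub>R v) = 0" and "w \<in> h ` I"
    then show "c w = 0" using indep[of "c \<circ> h"] by (auto simp: sum.reindex[OF inj])
  qed
  then have "V \<subseteq> span (h ` I)"
    using card_eq_dim[of "h ` I" V] assms card_image[OF inj] by auto
  then obtain c where "u = (\<Sum>v\<in>h ` I. c v *\<^sub>R v)"
    using \<open>u \<in> V\<close> span_finite[of "h ` I"] \<open>finite I\<close> by auto
  then show ?thesis by (auto simp: sum.reindex[OF inj])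
qed

lemma dependent_family_if_card_gt_dim:
  fixes h :: "'i \<Rightarrow> 'a::euclidean_space"
  assumes "finite I" and "inj_on h I" and "h ` I \<subseteq> V" and "card I > dim V"
  shows "\<exists>c. (\<Sum>i\<in>I. c i *\<^sub>R h i) = 0 \<and> (\<exists>i\<in>I. c i \<noteq> 0)"
proof -
  have "dependent (h ` I)"
    using independent_card_le_dim[of "h ` I" V] assms card_image by fastforce
  then obtain c where "\<exists>w\<in>h ` I. c w \<noteq> 0" "(\<Sum>w\<in>h ` I. c w *\<^sub>R w) = 0"
    using dependent_finite[of "h ` I"] \<open>finite I\<close> by auto
  then show ?thesis
    by (intro exI[of _ "c \<circ> h"]) (auto simp: sum.reindex[OF \<open>inj_on h I\<close>])
qed

lemma sum_mult_if_eq: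
  assumes "finite S" "E \<in> S"
  shows "(\<Sum>D\<in>S. c D * (if D = E then (N::real) else Q)) = (N - Q) * c E + Q * (\<Sum>D\<in>S. c D)"
proof -
  have "(\<Sum>D\<in>S. c D * (if D = E then N else Q)) = (\<Sum>D\<in>S. (N - Q) * (if D = E then c D else 0) + Q * c D)"
    by (intro sum.cong) (auto simp: algebra_simps)
  also have "\<dots> = (N - Q) * c E + Q * (\<Sum>D\<in>S. c D)"
    using assms by (simp add: sum.distrib sum_distrib_left[symmetric])
  finally show ?thesis .
qed

lemma sum_indicator_eq_of_nat_card:
  "finite X \<Longrightarrow> (\<Sum>i\<in>X. indicator D i :: 'a::semiring_1) = of_nat (card (X \<inter> D))"
  by (simp add: indicator_def)

lemma sum_indicator_remove:
  assumes "finite C" "x \<in> C"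
  shows "(\<Sum>y\<in>C - {x}. indicator B y) = real (card (C \<inter> B)) - indicator B x"
  using assms by (simp add: sum_diff1 sum_indicator_eq_of_nat_card)

lemma symmetric_design_image:
  assumes bij: "bij_betw \<phi> P {..<v}"
    and blocks: "\<And>b. b \<in> B \<Longrightarrow> b \<subseteq> P \<and> card b = k"
    and pairs: "\<And>x y. x \<in> P \<Longrightarrow> y \<in> P \<Longrightarrow> x \<noteq> y \<Longrightarrow> card {b\<in>B. x \<in> b \<and> y \<in> b} = c"
    and meets: "\<And>b1 b2. b1 \<in> B \<Longrightarrow> b2 \<in> B \<Longrightarrow> b1 \<noteq> b2 \<Longrightarrow> card (b1 \<inter> b2) = l"
  shows "symmetric_design v k c ((`) \<phi> ` B)"
proof -
  have inj: "inj_on \<phi> P" and img: "\<phi> ` P = {..<v}"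
    using bij by (auto simp: bij_betw_def)
  have "\<Union>B \<subseteq> P" using blocks by blast
  then have inj_blocks: "inj_on ((`) \<phi>) B"
    by (intro inj_on_image inj_on_subset[OF inj])
  have card_img: "card (\<phi> ` b) = card b" if "b \<subseteq> P" for b
    using card_image[OF inj_on_subset[OF inj that]] .
  have img_Int: "\<phi> ` b1 \<inter> \<phi> ` b2 = \<phi> ` (b1 \<inter> b2)" if "b1 \<in> B" "b2 \<in> B" for b1 b2
    using inj_on_image_Int[OF inj] blocks that by auto
  have "\<forall>b'\<in>(`) \<phi> ` B. b' \<subseteq> {..<v} \<and> card b' = k"
    using blocks card_img img by (metis image_mono imageE)
  moreover have "\<forall>b1'\<in>(`) \<phi> ` B. \<forall>b2'\<in>(`) \<phi> ` B. b1' \<noteq> b2' \<longrightarrow> card (b1' \<inter> b2') = l"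
  proof (intro ballI impI)
    fix b1' b2' assume "b1' \<in> (`) \<phi> ` B" "b2' \<in> (`) \<phi> ` B" "b1' \<noteq> b2'"
    then obtain b1 b2 where "b1 \<in> B" "b2 \<in> B" "b1' = \<phi> ` b1" "b2' = \<phi> ` b2" "b1 \<noteq> b2" by blast
    moreover have "b1 \<inter> b2 \<subseteq> P" using blocks \<open>b1 \<in> B\<close> by blast
    ultimately show "card (b1' \<inter> b2') = l"
      using img_Int card_img meets by simp
  qed
  moreover have "\<forall>x<v. \<forall>y<v. x \<noteq> y \<longrightarrow> card {b'\<in>(`) \<phi> ` B. x \<in> b' \<and> y \<in> b'} = c"
  proof (intro allI impI)
    fix x y assume "x < v" "y < v" "x \<noteq> y"
    then obtain x' y' where x'y': "x' \<in> P" "y' \<in> P" "x = \<phi> x'" "y = \<phi> y'" "x' \<noteq> y'"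
      using img by (metis imageE lessThan_iff)
    have mem: "\<phi> z \<in> \<phi> ` b \<longleftrightarrow> z \<in> b" if "z \<in> P" "b \<in> B" for z b
      using inj_on_image_mem_iff[OF inj that(1)] blocks[OF that(2)] by blast
    have "{b'\<in>(`) \<phi> ` B. x \<in> b' \<and> y \<in> b'} = (`) \<phi> ` {b\<in>B. x' \<in> b \<and> y' \<in> b}"
      using mem[OF x'y'(1)] mem[OF x'y'(2)] unfolding x'y'(3,4) by blast
    then show "card {b'\<in>(`) \<phi> ` B. x \<in> b' \<and> y \<in> b'} = c"
      using card_image[OF inj_on_subset[OF inj_blocks]] pairs[OF x'y'(1,2,5)] by auto
  qed
  ultimately show ?thesis unfolding symmetric_design_def by blast
qed

text \<open>Both \<open>c D + 2\<close> and \<open>D (D - 1)\<close>, with \<open>D = e\<^sup>2 + t\<close>, are multiples of \<open>e + 1\<close>, and \<open>2 c + 4\<close>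
  is an integer combination of them.\<close>

lemma succ_dvd_design_parameter:
  fixes e t k c :: int
  assumes "k * (e + 1) = t * (t - e)" and "c * (e^2 + t) = e - e^2"
  shows "(e + 1) dvd (2 * c + 4)"
proof -
  define D where "D = e^2 + t"
  define q where "q = k + e^2 * (e - 1) + t * (2 * e - 1)"
  have cD: "c * D + 2 = (e + 1) * (2 - e)"
    using assms(2) unfolding D_def by (simp add: algebra_simps power2_eq_square)
  have DD: "D * (D - 1) = (e + 1) * q"
  proof -
    have "(e + 1) * q = k * (e + 1) + (e + 1) * (e^2 * (e - 1) + t * (2 * e - 1))"
      unfolding q_def by (simp add: algebra_simps)
    also have "\<dots> = D * (D - 1)"
      unfolding assms(1) D_def by (simp add: algebra_simps power2_eq_square)
    finally show ?thesis by simp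
  qed
  have "2 * c + 4 = 2 * (c * D + 2) - c * ((c * D + 2) * (D - 1) - c * (D * (D - 1)))"
    by (simp add: algebra_simps)
  also have "\<dots> = (e + 1) * (2 * (2 - e) - c * ((2 - e) * (D - 1) - c * q))"
    unfolding cD DD by (simp add: algebra_simps)
  finally show ?thesis by simp
qed

section \<open>Strongly regular graphs\<close>

locale strongly_regular_graph =
  fixes adj :: "'v::finite \<Rightarrow> 'v \<Rightarrow> bool" and k lam mu :: nat
  assumes adj_sym: "\<And>x y. adj x y \<Longrightarrow> adj y x" and adj_irrefl: "\<And>x. \<not> adj x x"
    and degree: "\<And>x. card {y. adj x y} = k"
    and common_neighbours:
      "\<And>x y. x \<noteq> y \<Longrightarrow> card {z. adj x z \<and> adj y z} = (if adj x y then lam else mu)"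
begin

definition A :: "'v \<Rightarrow> 'v \<Rightarrow> real" where "A x y = (if adj x y then 1 else 0)"

definition A_mult :: "('v \<Rightarrow> real) \<Rightarrow> 'v \<Rightarrow> real" where "A_mult g x = (\<Sum>y\<in>UNIV. A x y * g y)"

lemma A_sym: "A x y = A y x"
  unfolding A_def by (auto dest: adj_sym)

lemma sum_A_row: "(\<Sum>y\<in>UNIV. A x y) = real k"
  using degree[of x] by (simp add: A_def sum.If_cases Collect_conv_if)

lemma sum_A_times_A:
  "(\<Sum>z\<in>UNIV. A x z * A z y) =
     (if y = x then real k else 0) + real lam * A x y + real mu * (1 - A x y - (if y = x then 1 else 0))"
proof -
  have "(\<Sum>z\<in>UNIV. A x z * A z y) = (\<Sum>z\<in>UNIV. of_bool (adj x z \<and> adj y z))"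
    unfolding A_def using adj_sym by (intro sum.cong) auto
  then have common: "(\<Sum>z\<in>UNIV. A x z * A z y) = real (card {z. adj x z \<and> adj y z})"
    by simp
  show ?thesis
  proof (cases "y = x")
    case True then show ?thesis using common degree[of x] adj_irrefl by (simp add: A_def)
  next
    case False then show ?thesis using common common_neighbours[of x y] adj_sym by (auto simp: A_def)
  qed
qed

lemma A_mult_A_mult:
  "A_mult (A_mult g) x =
     (real lam - real mu) * A_mult g x + (real k - real mu) * g x + real mu * (\<Sum>y\<in>UNIV. g y)"
proof -
  have "A_mult (A_mult g) x = (\<Sum>z\<in>UNIV. \<Sum>y\<in>UNIV. A x z * A z y * g y)"
    unfolding A_mult_def by (simp add: sum_distrib_left mult.assoc)
  also have "\<dots> = (\<Sum>y\<in>UNIV. (\<Sum>z\<in>UNIV. A x z * A z y) * g y)"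
    by (subst sum.swap) (simp add: sum_distrib_right)
  also have "\<dots> = (\<Sum>y\<in>UNIV. (if y = x then (real k - real mu) * g y else 0)
      + (real lam - real mu) * (A x y * g y) + real mu * g y)"
    by (intro sum.cong refl) (simp only: sum_A_times_A, auto simp: algebra_simps)
  also have "\<dots> = (real k - real mu) * g x + (real lam - real mu) * A_mult g x + real mu * (\<Sum>y\<in>UNIV. g y)"
    by (simp add: A_mult_def sum.distrib sum_distrib_left[symmetric])
  finally show ?thesis by (simp add: algebra_simps)
qed

lemma sum_A_mult: "(\<Sum>x\<in>UNIV. A_mult g x) = real k * (\<Sum>y\<in>UNIV. g y)"
proof -
  have "(\<Sum>x\<in>UNIV. A_mult g x) = (\<Sum>y\<in>UNIV. (\<Sum>x\<in>UNIV. A y x) * g y)"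
    unfolding A_mult_def by (subst sum.swap) (simp add: sum_distrib_right A_sym)
  then show ?thesis by (simp add: sum_A_row sum_distrib_left)
qed

lemma A_mult_const: "A_mult (\<lambda>_. c) = (\<lambda>_. real k * c)"
  by (simp add: A_mult_def sum_distrib_right[symmetric] sum_A_row fun_eq_iff)

lemma card_mult_mu: "real CARD('v) * real mu = real k * real k - (real lam - real mu) * real k - (real k - real mu)"
  using A_mult_A_mult[of "\<lambda>_. 1"] by (simp add: A_mult_const algebra_simps)

lemma adj_matrix_mult_vec: "(adj_matrix adj *v x) $ i = A_mult (\<lambda>j. x $ j) i"
  unfolding adj_matrix_def A_mult_def A_def matrix_vector_mult_def by simp

lemma eigenvalue_quadratic:
  assumes "is_eigenvalue (adj_matrix adj) e" "e \<noteq> real k"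
  shows "e * e = (real lam - real mu) * e + (real k - real mu)"
proof -
  obtain x where x: "x \<noteq> 0" "adj_matrix adj *v x = e *\<^sub>R x"
    using assms(1) unfolding is_eigenvalue_def by blast
  let ?g = "\<lambda>j. x $ j"
  have eig: "A_mult ?g = (\<lambda>i. e * ?g i)"
    using x(2) by (auto simp: adj_matrix_mult_vec[symmetric] vec_eq_iff)
  have "real k * (\<Sum>y\<in>UNIV. ?g y) = e * (\<Sum>y\<in>UNIV. ?g y)"
    using sum_A_mult[of ?g] by (simp add: eig sum_distrib_left)
  then have sum0: "(\<Sum>y\<in>UNIV. ?g y) = 0" using assms(2) by simp
  obtain i where i: "x $ i \<noteq> 0" using x(1) by (auto simp: vec_eq_iff)
  have "A_mult (A_mult ?g) i = A_mult (\<lambda>j. e * ?g j) i" by (simp only: eig)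
  also have "\<dots> = e * A_mult ?g i"
    by (simp add: A_mult_def sum_distrib_left algebra_simps)
  also have "\<dots> = e * e * x $ i" by (simp add: eig)
  finally have "A_mult (A_mult ?g) i = e * e * x $ i" .
  then have "e * e * x $ i = ((real lam - real mu) * e + (real k - real mu)) * x $ i"
    using A_mult_A_mult[of ?g i] sum0 eig by (simp add: algebra_simps)
  then show ?thesis using i by simp
qed

definition nbrs_in :: "'v set \<Rightarrow> 'v \<Rightarrow> real" where "nbrs_in C x = (\<Sum>y\<in>C. A x y)"

lemma nbrs_in_eq_card: "nbrs_in C x = real (card (C \<inter> {y. adj x y}))"
  unfolding nbrs_in_def A_def by (simp add: sum.If_cases)

lemma sum_nbrs_in: "(\<Sum>x\<in>UNIV. nbrs_in C x) = real (card C) * real k"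
proof -
  have "(\<Sum>x\<in>UNIV. nbrs_in C x) = (\<Sum>y\<in>C. \<Sum>x\<in>UNIV. A y x)"
    unfolding nbrs_in_def by (subst sum.swap) (simp add: A_sym)
  then show ?thesis by (simp add: sum_A_row)
qed

lemma sum_nbrs_in_squared:
  assumes "coclique adj C"
  shows "(\<Sum>x\<in>UNIV. nbrs_in C x * nbrs_in C x) =
    real (card C) * real k + real mu * (real (card C) * real (card C) - real (card C))"
proof -
  have "(\<Sum>x\<in>UNIV. nbrs_in C x * nbrs_in C x) = (\<Sum>y\<in>C. \<Sum>y'\<in>C. \<Sum>x\<in>UNIV. A y x * A x y')"
    unfolding nbrs_in_def sum_product by (subst sum.swap) (simp add: A_sym sum.swap[of _ UNIV])
  also have "\<dots> = (\<Sum>y\<in>C. \<Sum>y'\<in>C. (if y' = y then real k - real mu else 0) + real mu)"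
    using assms by (intro sum.cong refl) (simp only: sum_A_times_A, auto simp: A_def coclique_def)
  also have "\<dots> = real (card C) * real k + real mu * (real (card C) * real (card C) - real (card C))"
    by (simp add: sum.distrib algebra_simps)
  finally show ?thesis .
qed

end

locale srg_eigenvalues = strongly_regular_graph adj k lam mu
  for adj :: "'v::finite \<Rightarrow> 'v \<Rightarrow> bool" and k lam mu +
  fixes r s :: real
  assumes eigenvalue_sum: "r + s = real lam - real mu"
    and eigenvalue_prod: "r * s = real mu - real k"
    and r_pos: "r > 0" and s_neg: "s < 0" and r_less_k: "r < real k"
begin

lemma mu_eq: "real mu = real k + r * s"
  using eigenvalue_prod by simp

lemma card_mult_mu_factored: "real CARD('v) * real mu = (real k - r) * (real k - s)"
proof -
  have "real lam - real mu = r + s" "real k - real mu = - (r * s)"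
    using eigenvalue_sum eigenvalue_prod by auto
  then show ?thesis using card_mult_mu by (simp add: algebra_simps)
qed

text \<open>The deviations of \<open>nbrs_in C\<close> from \<open>0\<close> on \<open>C\<close> and from \<open>-s\<close> off \<open>C\<close> have vanishing
  sum of squares.\<close>

lemma delsarte_nbrs_in:
  assumes "coclique adj C" and size: "real (card C) * (real k - s) = - real CARD('v) * s"
  shows "nbrs_in C x = (if x \<in> C then 0 else -s)"
proof -
  define c where "c = real (card C)"
  define t where "t = -s"
  have t_pos: "t > 0" using s_neg t_def by simp
  have in_C: "nbrs_in C x = 0" if "x \<in> C" for x
    using assms(1) that by (simp add: nbrs_in_def A_def coclique_def)
  have outside: "(\<Sum>x\<in>UNIV. (if x \<in> C then 0 else 1::real)) = real CARD('v) - c"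
    by (simp add: sum.If_cases Compl_eq_Diff_UNIV card_Diff_subset of_nat_diff card_mono c_def)
  have c_t: "c * (real k + t) = real CARD('v) * t" using size by (simp add: c_def t_def)
  have mu_c: "real mu * c = t * (real k - r)"
  proof -
    have "real mu * c * (real k + t) = t * (real CARD('v) * real mu)"
      by (simp only: mult.assoc c_t) (simp add: algebra_simps)
    also have "\<dots> = t * (real k - r) * (real k + t)"
      using card_mult_mu_factored by (simp add: t_def)
    finally show ?thesis using t_pos r_pos r_less_k by simp
  qed
  have "(nbrs_in C x - (if x \<in> C then 0 else t))^2 =
      nbrs_in C x * nbrs_in C x - 2 * t * nbrs_in C x + t * t * (if x \<in> C then 0 else 1)" for x
    using in_C by (auto simp: power2_eq_square algebra_simps)
  then have "(\<Sum>x\<in>UNIV. (nbrs_in C x - (if x \<in> C then 0 else t))^2) =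
      (\<Sum>x\<in>UNIV. nbrs_in C x * nbrs_in C x) - 2 * t * (\<Sum>x\<in>UNIV. nbrs_in C x)
        + t * t * (\<Sum>x\<in>UNIV. (if x \<in> C then 0 else 1::real))"
    by (simp add: sum.distrib sum_subtractf sum_distrib_left)
  also have "\<dots> = c * (real k + real mu * c - real mu - t * real k) + t * (t * real CARD('v) - c * (real k + t))"
    unfolding sum_nbrs_in_squared[OF assms(1)] sum_nbrs_in outside by (simp add: c_def algebra_simps)
  also have "\<dots> = 0"
    unfolding mu_c using c_t mu_eq t_def by (simp add: algebra_simps)
  finally have "\<forall>x\<in>UNIV. (nbrs_in C x - (if x \<in> C then 0 else t))^2 = 0"
    by (subst sum_nonneg_eq_0_iff[symmetric]) auto
  then show ?thesis using t_def by auto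
qed

definition s_eigenspace :: "(real^'v) set" where
  "s_eigenspace = {x. adj_matrix adj *v x = s *\<^sub>R x}"

lemma s_eigenspace_iff: "x \<in> s_eigenspace \<longleftrightarrow> (\<forall>i. A_mult (\<lambda>j. x $ j) i = s * x $ i)"
  unfolding s_eigenspace_def by (auto simp: vec_eq_iff adj_matrix_mult_vec)

lemma s_eigenspace_sum_zero:
  assumes "u \<in> s_eigenspace" shows "(\<Sum>i\<in>UNIV. u $ i) = 0"
proof -
  have "real k * (\<Sum>i\<in>UNIV. u $ i) = s * (\<Sum>i\<in>UNIV. u $ i)"
    using sum_A_mult[of "\<lambda>j. u $ j"] assms by (simp add: s_eigenspace_iff sum_distrib_left)
  then show ?thesis using s_neg by simp
qed

definition delta :: real where "delta = (real k - r) / real CARD('v)"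

text \<open>\<open>proj_unit y\<close> is the \<open>y\<close>-th column of \<open>A - r I - delta J\<close>, i.e. \<open>s - r\<close> times the
  orthogonal projection of the unit vector \<open>e\<^sub>y\<close> onto the \<open>s\<close>-eigenspace
  (see \<open>inner_proj_unit\<close>).\<close>

definition proj_unit :: "'v \<Rightarrow> real^'v" where
  "proj_unit y = (\<chi> i. A i y - r * (if i = y then 1 else 0) - delta)"

lemma delta_pos: "delta > 0"
  unfolding delta_def using r_less_k by simp

lemma proj_unit_in_s_eigenspace: "proj_unit y \<in> s_eigenspace"
  unfolding s_eigenspace_iff
proof
  fix i
  have mu_delta: "real mu - delta * real k = - s * delta"
    using card_mult_mu_factored unfolding delta_def by (simp add: field_simps)
  have "A_mult (\<lambda>j. proj_unit y $ j) i =
      (\<Sum>j\<in>UNIV. A i j * A j y - (if j = y then r * A i j else 0) - delta * A i j)"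
    unfolding A_mult_def proj_unit_def by (intro sum.cong) (auto simp: algebra_simps)
  also have "\<dots> = (\<Sum>j\<in>UNIV. A i j * A j y) - r * A i y - delta * real k"
    by (simp add: sum_subtractf sum_distrib_left[symmetric] sum_A_row)
  also have "\<dots> = s * proj_unit y $ i"
    unfolding sum_A_times_A using eigenvalue_sum eigenvalue_prod mu_delta
    by (auto simp: proj_unit_def algebra_simps A_def adj_irrefl)
  finally show "A_mult (\<lambda>j. proj_unit y $ j) i = s * proj_unit y $ i" .
qed

lemma inner_proj_unit:
  assumes "u \<in> s_eigenspace" shows "u \<bullet> proj_unit y = (s - r) * u $ y"
proof -
  have "u \<bullet> proj_unit y =
      (\<Sum>i\<in>UNIV. A y i * u $ i - (if i = y then r * u $ i else 0) - delta * u $ i)"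
    unfolding inner_vec_def proj_unit_def by (intro sum.cong) (auto simp: algebra_simps A_sym)
  also have "\<dots> = A_mult (\<lambda>j. u $ j) y - r * u $ y - delta * (\<Sum>i\<in>UNIV. u $ i)"
    unfolding A_mult_def by (simp add: sum_subtractf sum_distrib_left)
  finally show ?thesis
    using assms s_eigenspace_sum_zero[OF assms] by (simp add: s_eigenspace_iff algebra_simps)
qed

lemma proj_unit_comb_component:
  assumes "coclique adj C" and "i \<in> C"
  shows "(\<Sum>y\<in>C. c y *\<^sub>R proj_unit y) $ i = - r * c i - delta * (\<Sum>y\<in>C. c y)"
proof -
  have "(\<Sum>y\<in>C. c y *\<^sub>R proj_unit y) $ i = (\<Sum>y\<in>C. (if y = i then - r * c y else 0) - delta * c y)"
    unfolding sum_component proj_unit_def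
    using assms by (intro sum.cong) (auto simp: A_def coclique_def algebra_simps)
  also have "\<dots> = - r * c i - delta * (\<Sum>y\<in>C. c y)"
    using assms(2) by (simp add: sum_subtractf sum_distrib_left)
  finally show ?thesis .
qed

lemma proj_unit_independent_on_coclique:
  assumes "coclique adj C" and comb: "(\<Sum>y\<in>C. c y *\<^sub>R proj_unit y) = 0"
  shows "\<forall>y\<in>C. c y = 0"
proof -
  have comp: "- r * c i - delta * (\<Sum>y\<in>C. c y) = 0" if "i \<in> C" for i
    by (metis proj_unit_comb_component[OF assms(1) that] comb zero_index)
  have "(\<Sum>i\<in>C. - r * c i - delta * (\<Sum>y\<in>C. c y)) = 0" using comp by simp
  moreover have "(\<Sum>i\<in>C. - r * c i - delta * (\<Sum>y\<in>C. c y)) =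
      - (r + real (card C) * delta) * (\<Sum>y\<in>C. c y)"
    by (simp add: sum_subtractf sum_negf sum_distrib_left[symmetric] algebra_simps)
  ultimately have "(r + real (card C) * delta) * (\<Sum>y\<in>C. c y) = 0"
    by (metis minus_mult_left neg_equal_0_iff_equal)
  moreover have "r + real (card C) * delta > 0" using r_pos delta_pos by (simp add: add_pos_nonneg)
  ultimately have "(\<Sum>y\<in>C. c y) = 0" by simp
  then show ?thesis using comp r_pos by auto
qed

text \<open>If \<open>|C| = dim s_eigenspace\<close>, the vectors \<open>proj_unit y\<close> (\<open>y \<in> C\<close>) form a basis of the
  eigenspace; expanding \<open>u'\<close> in it expresses inner products in terms of entries on \<open>C\<close> alone.\<close>

lemma s_eigenspace_inner_via_coclique:
  assumes C: "coclique adj C" "card C = dim s_eigenspace"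
    and u: "u \<in> s_eigenspace" and u': "u' \<in> s_eigenspace"
  shows "r * (r * real CARD('v) + real (card C) * (real k - r)) * (u \<bullet> u') =
    (r - s) * ((r * real CARD('v) + real (card C) * (real k - r)) * (\<Sum>i\<in>C. u $ i * u' $ i)
       - (real k - r) * (\<Sum>i\<in>C. u $ i) * (\<Sum>i\<in>C. u' $ i))"
proof -
  obtain c where u'_eq: "u' = (\<Sum>y\<in>C. c y *\<^sub>R proj_unit y)"
    using independent_family_spans[of C s_eigenspace proj_unit u'] C u'
      proj_unit_in_s_eigenspace proj_unit_independent_on_coclique by auto
  define S where "S = (\<Sum>y\<in>C. c y)"
  define X where "X = (\<Sum>y\<in>C. c y * u $ y)"
  define U where "U = (\<Sum>i\<in>C. u $ i)"
  define G where "G = r * real CARD('v) + real (card C) * (real k - r)"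
  have u'_on_C: "u' $ i = - r * c i - delta * S" if "i \<in> C" for i
    unfolding u'_eq S_def by (rule proj_unit_comb_component[OF C(1) that])
  have inner: "u \<bullet> u' = (s - r) * X"
    unfolding u'_eq X_def
    by (simp add: inner_sum_right inner_proj_unit[OF u] sum_distrib_left algebra_simps)
  have prod_on_C: "(\<Sum>i\<in>C. u $ i * u' $ i) = - r * X - delta * S * U"
  proof -
    have "(\<Sum>i\<in>C. u $ i * u' $ i) = (\<Sum>i\<in>C. - r * (c i * u $ i) - (delta * S) * u $ i)"
      by (intro sum.cong refl) (simp add: u'_on_C algebra_simps)
    then show ?thesis unfolding X_def U_def by (simp add: sum_subtractf sum_distrib_left)
  qed
  have sum_on_C: "(\<Sum>i\<in>C. u' $ i) = - r * S - real (card C) * delta * S"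
  proof -
    have "(\<Sum>i\<in>C. u' $ i) = (\<Sum>i\<in>C. - r * c i - delta * S)"
      by (intro sum.cong refl) (simp add: u'_on_C)
    then show ?thesis unfolding S_def by (simp add: sum_subtractf sum_distrib_left mult.assoc)
  qed
  have G_delta: "G * delta = (real k - r) * (r + real (card C) * delta)"
    unfolding delta_def G_def by (simp add: field_simps)
  have "(r - s) * (G * (- r * X - delta * S * U) - (real k - r) * U * (- r * S - real (card C) * delta * S))
     = (r - s) * (G * (- r * X)) - (r - s) * S * U * (G * delta - (real k - r) * (r + real (card C) * delta))"
    by (simp add: algebra_simps)
  also have "\<dots> = r * G * ((s - r) * X)"
    unfolding G_delta by (simp add: algebra_simps)
  finally show ?thesis unfolding inner prod_on_C sum_on_C U_def G_def by simp
qed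

end

lemma (in strongly_regular_graph) srg_eigenvalues_if_eigenvalues:
  assumes "is_eigenvalue (adj_matrix adj) r" "is_eigenvalue (adj_matrix adj) s"
    and "r > 0" "s < 0" "r < real k"
  shows "srg_eigenvalues adj k lam mu r s"
proof
  have "r * r = (real lam - real mu) * r + (real k - real mu)"
    "s * s = (real lam - real mu) * s + (real k - real mu)"
    using eigenvalue_quadratic assms by auto
  then have "(r - s) * (r + s) = (r - s) * (real lam - real mu)" by (simp add: algebra_simps)
  then show sum: "r + s = real lam - real mu" using assms by simp
  then have "s = real lam - real mu - r" by simp
  then have "r * s = r * (real lam - real mu) - r * r" by (simp only:) (simp add: algebra_simps)
  then show "r * s = real mu - real k" using \<open>r * r = _\<close> by simp
qed (use assms in auto)

section \<open>Families of \<open>m + 1\<close> Delsarte cocliques\<close>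

locale delsarte_family = srg_eigenvalues adj k lam mu r s
  for adj :: "'v::finite \<Rightarrow> 'v \<Rightarrow> bool" and k lam mu r s +
  fixes F :: "'v set set" and m :: nat
  assumes dim_s_eigenspace: "dim s_eigenspace = m" and card_F: "card F = Suc m"
    and coclique_member: "\<And>C. C \<in> F \<Longrightarrow> coclique adj C"
    and card_member: "\<And>C. C \<in> F \<Longrightarrow> card C = m"
    and delsarte_size: "real m * (real k - s) = - real CARD('v) * s"
begin

definition centred_indicator :: "'v set \<Rightarrow> real^'v" where
  "centred_indicator C = (\<chi> i. real CARD('v) * indicator C i - real m)"

lemma m_pos: "real m > 0"
proof -
  have "real m * (real k - s) > 0" using delsarte_size s_neg by (simp add: mult_pos_neg)
  then show ?thesis using s_neg by (simp add: zero_less_mult_iff)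
qed

lemma m_less_card: "real m < real CARD('v)"
proof -
  have "real m * (real k - s) < real CARD('v) * (real k - s)"
    using delsarte_size r_less_k r_pos s_neg by (simp add: algebra_simps)
  then show ?thesis using s_neg by simp
qed

lemma exists_two_members: "\<exists>C\<in>F. \<exists>D\<in>F. C \<noteq> D"
proof -
  obtain C where C: "C \<in> F" using card_F by fastforce
  have "card (F - {C}) > 0" using card_F C m_pos by (simp add: card_Diff_singleton)
  then obtain D where "D \<in> F - {C}" by (auto simp: card_gt_0_iff)
  then show ?thesis using C by blast
qed

lemma centred_indicator_in_s_eigenspace:
  assumes "C \<in> F" shows "centred_indicator C \<in> s_eigenspace"
  unfolding s_eigenspace_iff
proof
  fix i
  have "A_mult (\<lambda>j. centred_indicator C $ j) i = real CARD('v) * nbrs_in C i - real m * real k"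
    unfolding A_mult_def centred_indicator_def nbrs_in_def
    by (simp add: algebra_simps sum_subtractf sum_distrib_left[symmetric] sum_A_row)
  also have "\<dots> = s * centred_indicator C $ i"
    using delsarte_nbrs_in[OF coclique_member[OF assms]] card_member[OF assms] delsarte_size
    by (auto simp: centred_indicator_def algebra_simps)
  finally show "A_mult (\<lambda>j. centred_indicator C $ j) i = s * centred_indicator C $ i" .
qed

lemma sum_centred_indicator_prod_on:
  assumes "finite X"
  shows "(\<Sum>i\<in>X. centred_indicator D $ i * centred_indicator E $ i) =
    real CARD('v) ^ 2 * real (card (X \<inter> D \<inter> E)) - real CARD('v) * real m * real (card (X \<inter> D))
      - real CARD('v) * real m * real (card (X \<inter> E)) + real (card X) * real m ^ 2"
proof -
  have "(\<Sum>i\<in>X. centred_indicator D $ i * centred_indicator E $ i) =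
      (\<Sum>i\<in>X. real CARD('v) ^ 2 * indicator (D \<inter> E) i - real CARD('v) * real m * indicator D i
        - real CARD('v) * real m * indicator E i + real m ^ 2)"
    unfolding centred_indicator_def
    by (intro sum.cong refl) (simp add: indicator_inter_arith algebra_simps power2_eq_square)
  also have "\<dots> = real CARD('v) ^ 2 * real (card (X \<inter> (D \<inter> E))) - real CARD('v) * real m * real (card (X \<inter> D))
      - real CARD('v) * real m * real (card (X \<inter> E)) + real (card X) * real m ^ 2"
    using assms by (simp add: sum.distrib sum_subtractf sum_distrib_left[symmetric] sum_indicator_eq_of_nat_card)
  finally show ?thesis by (simp add: Int_assoc)
qed

lemma inner_centred_indicator:
  assumes "D \<in> F" "E \<in> F"
  shows "centred_indicator D \<bullet> centred_indicator E =
    real CARD('v) ^ 2 * real (card (D \<inter> E)) - real CARD('v) * real m ^ 2"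
  using sum_centred_indicator_prod_on[of UNIV D E] card_member[OF assms(1)] card_member[OF assms(2)]
  by (simp add: inner_vec_def power2_eq_square algebra_simps)

lemma sum_centred_indicator_on:
  assumes "C \<in> F"
  shows "(\<Sum>i\<in>C. centred_indicator D $ i) = real CARD('v) * real (card (C \<inter> D)) - real m ^ 2"
  using card_member[OF assms]
  by (simp add: centred_indicator_def sum_subtractf sum_distrib_left[symmetric] sum_indicator_eq_of_nat_card
      power2_eq_square)

lemma triple_intersection_identity:
  assumes C: "C \<in> F" and D: "D \<in> F" and E: "E \<in> F"
  shows "r * (r * real CARD('v) + real m * (real k - r)) *
      (real CARD('v) ^ 2 * real (card (D \<inter> E)) - real CARD('v) * real m ^ 2) =
    (r - s) * ((r * real CARD('v) + real m * (real k - r)) *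
       (real CARD('v) ^ 2 * real (card (C \<inter> D \<inter> E)) - real CARD('v) * real m * real (card (C \<inter> D))
         - real CARD('v) * real m * real (card (C \<inter> E)) + real m ^ 3)
     - (real k - r) * (real CARD('v) * real (card (C \<inter> D)) - real m ^ 2)
         * (real CARD('v) * real (card (C \<inter> E)) - real m ^ 2))"
  using s_eigenspace_inner_via_coclique[OF coclique_member[OF C] _
      centred_indicator_in_s_eigenspace[OF D] centred_indicator_in_s_eigenspace[OF E]]
    card_member[OF C] dim_s_eigenspace
  unfolding inner_centred_indicator[OF D E] sum_centred_indicator_on[OF C]
    sum_centred_indicator_prod_on[OF finite]
  by (simp add: Int_absorb1[of _ C] Int_assoc[symmetric] power3_eq_cube power2_eq_square)

lemma card_Int_less:
  assumes "C \<in> F" "D \<in> F" "C \<noteq> D" shows "card (C \<inter> D) < m"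
proof -
  have "card (C \<inter> D) \<noteq> card C"
  proof
    assume "card (C \<inter> D) = card C"
    then have "C \<subseteq> D" using card_subset_eq[of C "C \<inter> D"] by auto
    then show False using card_subset_eq[of D C] card_member assms by auto
  qed
  then show ?thesis using card_mono[of C "C \<inter> D"] card_member[OF assms(1)] by auto
qed

lemma pair_intersection_identity:
  assumes C: "C \<in> F" and D: "D \<in> F" and CD: "C \<noteq> D"
  shows "(r * real CARD('v) + real m * (real k - r)) * (real CARD('v) - 2 * real m)
     = (real k - r) * (real CARD('v) * real (card (C \<inter> D)) + real CARD('v) * real m - 2 * real m ^ 2)"
proof -
  define v where "v = real CARD('v)"
  define a where "a = real m"
  define h where "h = real k - r"
  define G where "G = r * v + a * h"
  define p where "p = real (card (C \<inter> D))"
  have CDD: "r * G * (v^2 * a - v * a^2) =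
      (r - s) * (G * (v^2 * p - v * a * p - v * a * p + a^3) - h * (v * p - a^2) * (v * p - a^2))"
    using triple_intersection_identity[OF C D D] card_member[OF D]
    unfolding v_def a_def h_def G_def p_def by simp
  have CCC: "r * G * (v^2 * a - v * a^2) =
      (r - s) * (G * (v^2 * a - v * a * a - v * a * a + a^3) - h * (v * a - a^2) * (v * a - a^2))"
    using triple_intersection_identity[OF C C C] card_member[OF C]
    unfolding v_def a_def h_def G_def p_def by simp
  have "(p - a) * v * (G * (v - 2 * a) - h * (v * p + v * a - 2 * a^2)) =
       (G * (v^2 * p - v * a * p - v * a * p + a^3) - h * (v * p - a^2) * (v * p - a^2))
     - (G * (v^2 * a - v * a * a - v * a * a + a^3) - h * (v * a - a^2) * (v * a - a^2))"
    by algebra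
  also have "\<dots> = 0" using CDD CCC r_pos s_neg by simp
  finally have "(p - a) * v * (G * (v - 2 * a) - h * (v * p + v * a - 2 * a^2)) = 0" .
  moreover have "p \<noteq> a" "v \<noteq> 0"
    using card_Int_less[OF C D CD] unfolding p_def a_def v_def by auto
  ultimately show ?thesis unfolding v_def a_def h_def G_def p_def by simp
qed

definition pair_meet :: nat where
  "pair_meet = (SOME p. \<forall>C\<in>F. \<forall>D\<in>F. C \<noteq> D \<longrightarrow> card (C \<inter> D) = p)"

lemma card_Int_eq_pair_meet:
  assumes "C \<in> F" "D \<in> F" "C \<noteq> D" shows "card (C \<inter> D) = pair_meet"
proof -
  have "card (C' \<inter> D') = card (C \<inter> D)" if "C' \<in> F" "D' \<in> F" "C' \<noteq> D'" for C' D'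
  proof -
    have "((real k - r) * real CARD('v)) * real (card (C' \<inter> D')) =
        ((real k - r) * real CARD('v)) * real (card (C \<inter> D))"
      using pair_intersection_identity[OF assms] pair_intersection_identity[OF that]
      by (simp add: algebra_simps)
    then show ?thesis using r_less_k by simp
  qed
  then have "\<forall>C'\<in>F. \<forall>D'\<in>F. C' \<noteq> D' \<longrightarrow> card (C' \<inter> D') = card (C \<inter> D)"
    by blast
  then have "\<forall>C'\<in>F. \<forall>D'\<in>F. C' \<noteq> D' \<longrightarrow> card (C' \<inter> D') = pair_meet"
    unfolding pair_meet_def by (rule someI)
  then show ?thesis using assms by blast
qed

lemma pair_meet_less: "pair_meet < m"
  using exists_two_members card_Int_less card_Int_eq_pair_meet by force

lemma inner_centred_indicator_comb:
  assumes "E \<in> F"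
  shows "centred_indicator E \<bullet> (\<Sum>D\<in>F. c D *\<^sub>R centred_indicator D) =
    real CARD('v) ^ 2 * (real m - real pair_meet) * c E
      + (real CARD('v) ^ 2 * real pair_meet - real CARD('v) * real m ^ 2) * (\<Sum>D\<in>F. c D)"
proof -
  have "centred_indicator E \<bullet> (\<Sum>D\<in>F. c D *\<^sub>R centred_indicator D) =
    (\<Sum>D\<in>F. c D * (if D = E then real CARD('v) ^ 2 * real m - real CARD('v) * real m ^ 2
       else real CARD('v) ^ 2 * real pair_meet - real CARD('v) * real m ^ 2))"
    unfolding inner_sum_right inner_scaleR_right
    using assms inner_centred_indicator card_member card_Int_eq_pair_meet
    by (intro sum.cong refl) (auto simp: inner_commute)
  then show ?thesis using assms by (simp add: sum_mult_if_eq algebra_simps)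
qed

text \<open>The \<open>m + 1\<close> centred indicators lie in the \<open>m\<close>-dimensional eigenspace, so their Gram
  matrix \<open>N I + Q J\<close> (with \<open>N > 0\<close>) is singular, which forces \<open>N + (m + 1) Q = 0\<close>.\<close>

lemma card_mult_pair_meet: "real CARD('v) * real pair_meet = real m ^ 2 + real m - real CARD('v)"
proof -
  define N where "N = real CARD('v) ^ 2 * (real m - real pair_meet)"
  define Q where "Q = real CARD('v) ^ 2 * real pair_meet - real CARD('v) * real m ^ 2"
  have N_pos: "N > 0" using pair_meet_less unfolding N_def by simp
  have inner: "centred_indicator E \<bullet> (\<Sum>D\<in>F. c D *\<^sub>R centred_indicator D) = N * c E + Q * sum c F"
    if "E \<in> F" for E c
    using inner_centred_indicator_comb[OF that] unfolding N_def Q_def .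
  have "inj_on centred_indicator F"
  proof (rule inj_onI, rule ccontr)
    fix C D assume "C \<in> F" "D \<in> F" "centred_indicator C = centred_indicator D" "C \<noteq> D"
    then have "centred_indicator C \<bullet> centred_indicator C = centred_indicator C \<bullet> centred_indicator D"
      by simp
    then show False
      using inner_centred_indicator card_member card_Int_eq_pair_meet pair_meet_less \<open>C \<in> F\<close> \<open>D \<in> F\<close> \<open>C \<noteq> D\<close>
      by simp
  qed
  then obtain c where dep: "(\<Sum>D\<in>F. c D *\<^sub>R centred_indicator D) = 0" and "\<exists>D\<in>F. c D \<noteq> 0"
    using dependent_family_if_card_gt_dim[of F centred_indicator s_eigenspace]
      centred_indicator_in_s_eigenspace card_F dim_s_eigenspace by fastforce
  then obtain D where D: "D \<in> F" "c D \<noteq> 0" by blast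
  have comp: "N * c E + Q * sum c F = 0" if "E \<in> F" for E
    using inner[OF that, of c] dep by simp
  have "(\<Sum>E\<in>F. N * c E + Q * sum c F) = 0" using comp by simp
  then have "(N + real (Suc m) * Q) * sum c F = 0"
    using card_F by (simp add: sum.distrib sum_distrib_left[symmetric] algebra_simps)
  moreover have "sum c F \<noteq> 0"
    using comp[OF D(1)] D(2) N_pos by auto
  ultimately have "N + real (Suc m) * Q = 0" by simp
  then have "real CARD('v) * real m * (real CARD('v) * real pair_meet - (real m ^ 2 + real m - real CARD('v))) = 0"
    unfolding N_def Q_def by (simp add: power2_eq_square algebra_simps)
  then show ?thesis using m_pos by simp
qed

lemma card_members_containing: "real CARD('v) * real (card {C\<in>F. x \<in> C}) = real m * (real m + 1)"
proof -
  define w where "w = (\<Sum>D\<in>F. centred_indicator D)"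
  have "centred_indicator E \<bullet> w = 0" if "E \<in> F" for E
    using inner_centred_indicator_comb[OF that, of "\<lambda>_. 1"] card_F card_mult_pair_meet
    unfolding w_def by (simp add: power2_eq_square algebra_simps)
  then have "w \<bullet> w = 0" unfolding w_def by (simp add: inner_sum_left)
  then have "w $ x = 0" by simp
  moreover have "w $ x = real CARD('v) * (\<Sum>C\<in>F. indicator C x) - real (Suc m) * real m"
    unfolding w_def using card_F by (simp add: centred_indicator_def sum_subtractf sum_distrib_left)
  moreover have "(\<Sum>C\<in>F. indicator C x) = real (card {C\<in>F. x \<in> C})"
    by (simp add: indicator_def sum.If_cases Int_def)
  ultimately show ?thesis by (simp add: algebra_simps)
qed

lemma card_members_containing_eq: "card {C\<in>F. x \<in> C} = Suc pair_meet"
proof -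
  have "real CARD('v) * real (card {C\<in>F. x \<in> C}) = real CARD('v) * (1 + real pair_meet)"
    using card_members_containing card_mult_pair_meet by (simp add: algebra_simps power2_eq_square)
  then show ?thesis by simp
qed

lemma sum_other_members_indicator:
  assumes "C0 \<in> F" "x \<in> C0"
  shows "(\<Sum>D\<in>F - {C0}. indicator D x) = real pair_meet"
proof -
  have "{D\<in>F. x \<in> D} = insert C0 {D\<in>F - {C0}. x \<in> D}" using assms by auto
  then have "card {D\<in>F - {C0}. x \<in> D} = pair_meet"
    using card_members_containing_eq[of x] by simp
  then show ?thesis by (simp add: indicator_def Int_def)
qed

lemma triple_intersection_eq:
  assumes "C \<in> F" "D \<in> F" "E \<in> F" "C \<noteq> D" "C \<noteq> E" "D \<noteq> E"
    and "C' \<in> F" "D' \<in> F" "E' \<in> F" "C' \<noteq> D'" "C' \<noteq> E'" "D' \<noteq> E'"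
  shows "card (C \<inter> D \<inter> E) = card (C' \<inter> D' \<inter> E')"
proof -
  define G where "G = r * real CARD('v) + real m * (real k - r)"
  have "(r - s) * G * real CARD('v) ^ 2 * real (card (C \<inter> D \<inter> E)) =
      (r - s) * G * real CARD('v) ^ 2 * real (card (C' \<inter> D' \<inter> E'))"
    using triple_intersection_identity[of C D E] triple_intersection_identity[of C' D' E']
      assms card_Int_eq_pair_meet unfolding G_def by (simp add: algebra_simps)
  moreover have "G > 0"
    unfolding G_def using r_pos r_less_k m_pos by (intro add_pos_nonneg) auto
  then have "(r - s) * G * real CARD('v) ^ 2 \<noteq> 0" using r_pos s_neg by simp
  ultimately show ?thesis by simp
qed

definition triple_meet :: nat where
  "triple_meet = (SOME l. \<forall>C\<in>F. \<forall>D\<in>F. \<forall>E\<in>F. C \<noteq> D \<and> C \<noteq> E \<and> D \<noteq> E \<longrightarrow> card (C \<inter> D \<inter> E) = l)"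

lemma card_Int_Int_eq_triple_meet:
  assumes "C \<in> F" "D \<in> F" "E \<in> F" "C \<noteq> D" "C \<noteq> E" "D \<noteq> E"
  shows "card (C \<inter> D \<inter> E) = triple_meet"
proof -
  have "\<forall>C'\<in>F. \<forall>D'\<in>F. \<forall>E'\<in>F. C' \<noteq> D' \<and> C' \<noteq> E' \<and> D' \<noteq> E' \<longrightarrow>
      card (C' \<inter> D' \<inter> E') = card (C \<inter> D \<inter> E)"
    using triple_intersection_eq assms by metis
  then have "\<forall>C'\<in>F. \<forall>D'\<in>F. \<forall>E'\<in>F. C' \<noteq> D' \<and> C' \<noteq> E' \<and> D' \<noteq> E' \<longrightarrow> card (C' \<inter> D' \<inter> E') = triple_meet"
    unfolding triple_meet_def by (rule someI)
  then show ?thesis using assms by blast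
qed

lemma triple_meet_relation: "(real m - 1) * real triple_meet = real pair_meet * (real pair_meet - 1)"
proof -
  obtain C D where CD: "C \<in> F" "D \<in> F" "C \<noteq> D" using exists_two_members by blast
  define S where "S = F - {C, D}"
  have "card S = m - 1" unfolding S_def using card_F CD by (simp add: card_Diff_subset)
  have "(\<Sum>E\<in>S. real (card (C \<inter> D \<inter> E))) = (\<Sum>E\<in>S. real triple_meet)"
    using card_Int_Int_eq_triple_meet CD unfolding S_def by (intro sum.cong) auto
  also have "\<dots> = (real m - 1) * real triple_meet"
    using \<open>card S = m - 1\<close> m_pos by (simp add: of_nat_diff)
  finally have "(\<Sum>E\<in>S. real (card (C \<inter> D \<inter> E))) = (real m - 1) * real triple_meet" .
  moreover have "(\<Sum>E\<in>S. real (card (C \<inter> D \<inter> E))) = (\<Sum>z\<in>C \<inter> D. \<Sum>E\<in>S. indicator E z)"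
    by (subst sum.swap) (simp add: sum_indicator_eq_of_nat_card)
  moreover have "(\<Sum>E\<in>S. indicator E z) = real pair_meet - 1" if "z \<in> C \<inter> D" for z
  proof -
    have "F - {C} = insert D S" "D \<notin> S" using CD unfolding S_def by auto
    then show ?thesis using sum_other_members_indicator[OF CD(1), of z] that by simp
  qed
  ultimately show ?thesis using card_Int_eq_pair_meet[OF CD] by simp
qed

lemma sum_pair_counts:
  assumes "C0 \<in> F" "x \<in> C0"
  shows "(\<Sum>y\<in>C0 - {x}. \<Sum>D\<in>F - {C0}. indicator D x * indicator D y) =
    real pair_meet * (real pair_meet - 1)"
proof -
  have "(\<Sum>y\<in>C0 - {x}. \<Sum>D\<in>F - {C0}. indicator D x * indicator D y) =
      (\<Sum>D\<in>F - {C0}. indicator D x * (\<Sum>y\<in>C0 - {x}. indicator D y :: real))"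
    by (rule trans[OF sum.swap]) (simp add: sum_distrib_left del: sum_indicator_mult sum_mult_indicator)
  also have "\<dots> = (\<Sum>D\<in>F - {C0}. (real pair_meet - 1) * indicator D x)"
  proof (intro sum.cong refl)
    fix D assume "D \<in> F - {C0}"
    then have "card (C0 \<inter> D) = pair_meet" using card_Int_eq_pair_meet[OF assms(1), of D] by auto
    then show "indicator D x * (\<Sum>y\<in>C0 - {x}. indicator D y) = (real pair_meet - 1) * indicator D x"
      using assms(2) by (simp add: sum_indicator_remove split: split_indicator)
  qed
  also have "\<dots> = real pair_meet * (real pair_meet - 1)"
    using sum_other_members_indicator[OF assms] by (simp add: sum_distrib_left[symmetric])
  finally show ?thesis .
qed

lemma sum_pair_counts_squared:
  assumes "C0 \<in> F" "x \<in> C0"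
  shows "(\<Sum>y\<in>C0 - {x}. (\<Sum>D\<in>F - {C0}. indicator D x * indicator D y)^2) =
    real pair_meet * (real pair_meet - 1) * real triple_meet"
proof -
  let ?F = "F - {C0}" and ?p = "real pair_meet" and ?l = "real triple_meet"
  have meet: "(\<Sum>y\<in>C0 - {x}. indicator (D \<inter> E) y) = (if E = D then ?p - 1 else ?l - 1)"
    if "D \<in> ?F" "E \<in> ?F" "x \<in> D" "x \<in> E" for D E
  proof (cases "E = D")
    case True
    have "card (C0 \<inter> D) = pair_meet"
      using that(1) card_Int_eq_pair_meet[OF assms(1), of D] by auto
    then show ?thesis using True that(3) assms(2) by (simp add: sum_indicator_remove)
  next
    case False
    have "card (C0 \<inter> D \<inter> E) = triple_meet"
      using that(1,2) False card_Int_Int_eq_triple_meet[OF assms(1), of D E] by auto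
    then show ?thesis using False that(3,4) assms(2) by (simp add: sum_indicator_remove Int_assoc)
  qed
  have "(\<Sum>y\<in>C0 - {x}. (\<Sum>D\<in>?F. indicator D x * indicator D y)^2) =
      (\<Sum>y\<in>C0 - {x}. \<Sum>D\<in>?F. \<Sum>E\<in>?F. indicator D x * indicator E x * indicator (D \<inter> E) y :: real)"
    by (intro sum.cong refl)
      (simp add: power2_eq_square sum_product indicator_inter_arith mult_ac del: sum_indicator_mult sum_mult_indicator)
  also have "\<dots> =
      (\<Sum>D\<in>?F. \<Sum>E\<in>?F. indicator D x * indicator E x * (\<Sum>y\<in>C0 - {x}. indicator (D \<inter> E) y))"
    unfolding sum_distrib_left by (subst sum.swap) (intro sum.cong refl, rule sum.swap)
  also have "\<dots> = (\<Sum>D\<in>?F. indicator D x * (\<Sum>E\<in>?F. indicator E x * (if E = D then ?p - 1 else ?l - 1)))"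
    using meet by (intro sum.cong refl) (auto simp: indicator_def sum_distrib_left)
  also have "\<dots> = (\<Sum>D\<in>?F. indicator D x * ((?p - ?l) * indicator D x + (?l - 1) * ?p))"
  proof (intro sum.cong refl)
    fix D assume "D \<in> ?F"
    then show "indicator D x * (\<Sum>E\<in>?F. indicator E x * (if E = D then ?p - 1 else ?l - 1)) =
        indicator D x * ((?p - ?l) * indicator D x + (?l - 1) * ?p)"
      by (subst sum_mult_if_eq) (simp_all add: sum_other_members_indicator[OF assms] algebra_simps)
  qed
  also have "\<dots> = (\<Sum>D\<in>?F. ((?p - ?l) + (?l - 1) * ?p) * indicator D x)"
    by (intro sum.cong refl) (simp add: indicator_def algebra_simps)
  also have "\<dots> = ?p * (?p - 1) * ?l"
    unfolding sum_distrib_left[symmetric] sum_other_members_indicator[OF assms]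
    by (simp add: algebra_simps)
  finally show ?thesis .
qed

text \<open>The counts \<open>cnt y\<close> have mean \<open>triple_meet\<close> and vanishing variance over \<open>C0 - {x}\<close>.\<close>

lemma card_other_members_containing_pair:
  assumes "C0 \<in> F" "x \<in> C0" "y \<in> C0" "x \<noteq> y"
  shows "card {D\<in>F - {C0}. x \<in> D \<and> y \<in> D} = triple_meet"
proof -
  define cnt where "cnt y = (\<Sum>D\<in>F - {C0}. indicator D x * indicator D y :: real)" for y
  let ?l = "real triple_meet"
  have "card (C0 - {x}) = m - 1" using card_member[OF assms(1)] assms(2) by simp
  then have "(\<Sum>y\<in>C0 - {x}. (cnt y - ?l)^2) =
      (\<Sum>y\<in>C0 - {x}. cnt y ^ 2) - 2 * ?l * (\<Sum>y\<in>C0 - {x}. cnt y) + (real m - 1) * ?l * ?l"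
    using m_pos by (simp add: power2_eq_square algebra_simps sum.distrib sum_subtractf
        sum_distrib_left of_nat_diff)
  also have "\<dots> = 0"
    unfolding cnt_def sum_pair_counts[OF assms(1,2)] sum_pair_counts_squared[OF assms(1,2)]
      triple_meet_relation[symmetric] by (simp add: algebra_simps)
  finally have "\<forall>y\<in>C0 - {x}. (cnt y - ?l)^2 = 0"
    by (subst sum_nonneg_eq_0_iff[symmetric]) auto
  then have "cnt y = ?l" using assms(3,4) by auto
  moreover have "cnt y = real (card {D\<in>F - {C0}. x \<in> D \<and> y \<in> D})"
    unfolding cnt_def by (simp add: indicator_def Int_def conj_commute conj_left_commute)
  ultimately show ?thesis by simp
qed

lemma pair_meet_zero_if_eq_triple_meet:
  assumes "triple_meet = pair_meet" shows "pair_meet = 0"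
proof -
  have "real pair_meet * (real m - real pair_meet) = 0"
    using triple_meet_relation assms by (simp add: algebra_simps)
  then show ?thesis using pair_meet_less by simp
qed

lemma derived_design:
  assumes C0: "C0 \<in> F"
  defines "B \<equiv> (\<lambda>D. C0 \<inter> D) ` (F - {C0})"
  shows "\<And>b. b \<in> B \<Longrightarrow> b \<subseteq> C0 \<and> card b = pair_meet"
    and "\<And>x y. x \<in> C0 \<Longrightarrow> y \<in> C0 \<Longrightarrow> x \<noteq> y \<Longrightarrow> card {b\<in>B. x \<in> b \<and> y \<in> b} = triple_meet"
    and "\<And>b1 b2. b1 \<in> B \<Longrightarrow> b2 \<in> B \<Longrightarrow> b1 \<noteq> b2 \<Longrightarrow> card (b1 \<inter> b2) = triple_meet"
proof -
  have meet3: "card ((C0 \<inter> D) \<inter> (C0 \<inter> E)) = triple_meet"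
    if "D \<in> F - {C0}" "E \<in> F - {C0}" "D \<noteq> E" for D E
  proof -
    have "(C0 \<inter> D) \<inter> (C0 \<inter> E) = C0 \<inter> D \<inter> E" by blast
    then show ?thesis using card_Int_Int_eq_triple_meet[OF C0, of D E] that by fastforce
  qed
  show "b \<subseteq> C0 \<and> card b = pair_meet" if "b \<in> B" for b
    using that card_Int_eq_pair_meet C0 unfolding B_def by auto
  show "card (b1 \<inter> b2) = triple_meet" if "b1 \<in> B" "b2 \<in> B" "b1 \<noteq> b2" for b1 b2
    using that meet3 unfolding B_def by auto
  fix x y assume xy: "x \<in> C0" "y \<in> C0" "x \<noteq> y"
  have pairs: "card {D\<in>F - {C0}. x \<in> D \<and> y \<in> D} = triple_meet"
    using card_other_members_containing_pair[OF C0 xy] .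
  have img: "{b\<in>B. x \<in> b \<and> y \<in> b} = (\<lambda>D. C0 \<inter> D) ` {D\<in>F - {C0}. x \<in> D \<and> y \<in> D}"
    unfolding B_def using xy by auto
  show "card {b\<in>B. x \<in> b \<and> y \<in> b} = triple_meet"
  proof (cases "triple_meet = pair_meet")
    case True
    then have "{D\<in>F - {C0}. x \<in> D \<and> y \<in> D} = {}"
      using pairs pair_meet_zero_if_eq_triple_meet by simp
    then show ?thesis using img True pair_meet_zero_if_eq_triple_meet by simp
  next
    case False
    have "inj_on (\<lambda>D. C0 \<inter> D) (F - {C0})"
    proof (rule inj_onI, rule ccontr)
      fix D E assume DE: "D \<in> F - {C0}" "E \<in> F - {C0}" "C0 \<inter> D = C0 \<inter> E" "D \<noteq> E"
      then have "triple_meet = card (C0 \<inter> D)" using meet3[of D E] by simp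
      then show False using False card_Int_eq_pair_meet C0 DE(1) by auto
    qed
    then have "inj_on (\<lambda>D. C0 \<inter> D) {D\<in>F - {C0}. x \<in> D \<and> y \<in> D}"
      by (rule inj_on_subset) blast
    then show ?thesis unfolding img using pairs by (simp add: card_image)
  qed
qed

section \<open>The design parameters\<close>

lemma s_integral: "\<exists>n::nat. s = - real n"
proof -
  obtain C where C: "C \<in> F" using exists_two_members by blast
  have "card C < CARD('v)" using m_less_card card_member[OF C] by simp
  then obtain x where x: "x \<notin> C" by (metis UNIV_I card_mono finite less_le_not_le subsetI)
  have "nbrs_in C x = - s"
    using delsarte_nbrs_in[OF coclique_member[OF C]] card_member[OF C] delsarte_size x by simp
  then show ?thesis unfolding nbrs_in_eq_card by (metis minus_minus)
qed

text \<open>Eliminates \<open>m\<close> and \<open>pair_meet\<close> from \<open>pair_intersection_identity\<close>.\<close>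

lemma card_eigenvalue_relation:
  "real CARD('v) * (r - s) * (real k + s) + (real k - r) * (s * real CARD('v) + (real k - s)) = 0"
proof -
  define v where "v = real CARD('v)"
  define a where "a = real m"
  define h where "h = real k - r"
  define K where "K = real k - s"
  obtain C D where CD: "C \<in> F" "D \<in> F" "C \<noteq> D" using exists_two_members by blast
  have aK: "a * K = - v * s" using delsarte_size unfolding a_def K_def v_def .
  have "(r * v + a * h) * (v - 2 * a) = h * (v * real pair_meet + v * a - 2 * a^2)"
    using pair_intersection_identity[OF CD] card_Int_eq_pair_meet[OF CD]
    unfolding v_def a_def h_def by simp
  also have "\<dots> = h * (a^2 + a - v + v * a - 2 * a^2)"
    unfolding v_def a_def card_mult_pair_meet ..
  also have "\<dots> = h * (v - a) * (a - 1)" by (simp add: algebra_simps power2_eq_square)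
  finally have "K^2 * ((r * v + a * h) * (v - 2 * a)) = K^2 * (h * (v - a) * (a - 1))" by simp
  moreover have "K^2 * ((r * v + a * h) * (v - 2 * a)) = (r * v * K + (a * K) * h) * (v * K - 2 * (a * K))"
    "K^2 * (h * (v - a) * (a - 1)) = h * (v * K - a * K) * (a * K - K)"
    by (simp_all add: power2_eq_square algebra_simps)
  ultimately have "v * real k * (v * (r - s) * (real k + s) + h * (s * v + K)) = 0"
    unfolding aK unfolding h_def K_def by (simp add: algebra_simps power2_eq_square)
  moreover have "v * real k \<noteq> 0" using r_pos r_less_k unfolding v_def by simp
  ultimately show ?thesis unfolding v_def h_def K_def by simp
qed

lemma valency_relation: "real k * (r + 1) = s * (s - r)"
proof -
  define h where "h = real k - r"
  define K where "K = real k - s"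
  have v_mu: "real CARD('v) * real mu = h * K"
    using card_mult_mu_factored unfolding h_def K_def .
  have "h * K * ((r - s) * (real k + s) + s * h + real mu) =
      (h * K) * (r - s) * (real k + s) + h * (s * (h * K) + K * real mu)"
    by (simp add: algebra_simps)
  also have "\<dots> = real mu * (real CARD('v) * (r - s) * (real k + s) + h * (s * real CARD('v) + K))"
    unfolding v_mu[symmetric] by (simp add: algebra_simps)
  also have "\<dots> = 0" using card_eigenvalue_relation unfolding h_def K_def by simp
  finally have "(r - s) * (real k + s) + s * h + real mu = 0"
    using r_less_k s_neg unfolding h_def K_def by simp
  then show ?thesis using mu_eq unfolding h_def by (simp add: algebra_simps)
qed

lemma mu_pos: "real mu > 0"
proof -
  have "real CARD('v) * real mu > 0"
    unfolding card_mult_mu_factored using r_less_k s_neg by simp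
  then show ?thesis by (simp add: zero_less_mult_iff)
qed

lemma mu_mult_r_plus_1: "real mu * (r + 1) = s * (r^2 + s)"
  using mu_eq valency_relation by (simp add: algebra_simps power2_eq_square)

lemma r_squared_plus_s_neg: "r^2 + s < 0"
proof -
  have "s * (r^2 + s) > 0" using mu_mult_r_plus_1[symmetric] mu_pos r_pos by simp
  then show ?thesis using s_neg by (simp add: zero_less_mult_iff)
qed

lemma m_mult_denominator: "real m * (r^2 + s) = r^2 + r * s + r - s^2"
proof -
  have "(real m * real mu) * (real k - s) = (- s * (real k - r)) * (real k - s)"
    using delsarte_size card_mult_mu_factored by (metis mult.assoc mult.commute mult_minus_left)
  moreover have "real k - s \<noteq> 0" using s_neg by simp
  ultimately have m_mu: "real m * real mu = - s * (real k - r)" by (metis mult_right_cancel)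
  have "s * (real m * (r^2 + s)) = s * (- (real k - r) * (r + 1))"
    using m_mu mu_mult_r_plus_1 by (metis mult.assoc mult.commute mult_minus_left)
  then have "real m * (r^2 + s) = - (real k - r) * (r + 1)" using s_neg by simp
  then have "real m * (r^2 + s) = - (real k * (r + 1)) + r * (r + 1)" by (simp add: algebra_simps)
  then show ?thesis unfolding valency_relation by (simp add: algebra_simps power2_eq_square)
qed

lemma pair_meet_mult_denominator: "real pair_meet * (r^2 + s) = (s + 1) * r"
proof -
  define K where "K = real k - s"
  have mK: "real m * K = - real CARD('v) * s" using delsarte_size unfolding K_def .
  have "real m * (K * real pair_meet) = - s * (real CARD('v) * real pair_meet)"
    using mK by (metis mult.assoc mult.commute mult_minus_left)
  also have "\<dots> = real m * (- s * real m - s - K)"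
    unfolding card_mult_pair_meet using mK by (simp add: algebra_simps power2_eq_square)
  finally have "K * real pair_meet = - s * real m - s - K" using m_pos by simp
  then have pK: "real pair_meet * K = - s * real m - real k"
    unfolding K_def by (simp add: algebra_simps)
  have "K * ((r + 1) * (real pair_meet * (r^2 + s))) = (r + 1) * ((real pair_meet * K) * (r^2 + s))"
    by (simp add: algebra_simps)
  also have "\<dots> = - s * (r + 1) * (real m * (r^2 + s)) - (real k * (r + 1)) * (r^2 + s)"
    unfolding pK by (simp add: algebra_simps)
  also have "\<dots> = - s * (r + 1) * (r^2 + r * s + r - s^2) - s * (s - r) * (r^2 + s)"
    unfolding m_mult_denominator valency_relation ..
  also have "\<dots> = (s * (s - r) - s * (r + 1)) * ((s + 1) * r)"
    by (simp add: algebra_simps power2_eq_square)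
  also have "\<dots> = K * ((r + 1) * ((s + 1) * r))"
    unfolding valency_relation[symmetric] K_def by (simp add: algebra_simps)
  finally show ?thesis using r_pos s_neg r_less_k unfolding K_def by simp
qed

lemma r_integral: "\<exists>e::int. r = of_int e"
proof -
  obtain n :: nat where "s = - real n" using s_integral by blast
  then have "r = of_int (int lam - int mu + int n)" using eigenvalue_sum by simp
  then show ?thesis by blast
qed

lemma m_ne_one: "m \<noteq> 1"
proof
  assume m1: "m = 1"
  then have "pair_meet = 0" using pair_meet_less by simp
  then have "real CARD('v) = 2" using card_mult_pair_meet m1 by simp
  then have "s = - real k" using delsarte_size m1 by simp
  then have "real k * (r + 1) = (- real k) * (- real k - r)" using valency_relation by simp
  then have "real k * (r + 1) = real k * (real k + r)" by (simp add: algebra_simps)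
  then have "real k = 1" using r_pos r_less_k by simp
  moreover obtain e :: int where "r = of_int e" using r_integral by blast
  ultimately show False using r_pos r_less_k by simp
qed

lemma triple_meet_mult_denominator: "real triple_meet * (r^2 + s) = r - r^2"
proof -
  define D where "D = r^2 + s"
  have m1D: "(real m - 1) * D = (r - s) * (s + 1)"
    using m_mult_denominator unfolding D_def by (simp add: algebra_simps power2_eq_square)
  have "(r - s) * (s + 1) * (real triple_meet * D) = ((real m - 1) * real triple_meet) * D * D"
    unfolding m1D[symmetric] by (simp add: algebra_simps)
  also have "\<dots> = (real pair_meet * D) * (real pair_meet * D - D)"
    unfolding triple_meet_relation by (simp add: algebra_simps)
  also have "\<dots> = (r - s) * (s + 1) * (r - r^2)"
    unfolding D_def pair_meet_mult_denominator by (simp add: algebra_simps power2_eq_square)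
  finally have "(r - s) * (s + 1) * (real triple_meet * D) = (r - s) * (s + 1) * (r - r^2)" .
  moreover have "(r - s) * (s + 1) \<noteq> 0"
    using m1D m_ne_one r_squared_plus_s_neg unfolding D_def by auto
  ultimately show ?thesis unfolding D_def by simp
qed

lemma symmetric_design_with_parameters:
  "\<exists>vt kt c :: nat.
     real vt = (r^2 + r * s + r - s^2) / (r^2 + s) \<and>
     real kt = ((s + 1) * r) / (r^2 + s) \<and>
     real c = (- (r^2) + r) / (r^2 + s) \<and>
     (\<exists>B. symmetric_design vt kt c B) \<and>
     (\<exists>e::int. r = of_int e \<and> (e + 1) dvd (2 * int c + 4))"
proof (rule exI[of _ m], rule exI[of _ pair_meet], rule exI[of _ triple_meet], intro conjI)
  have denom: "r^2 + s \<noteq> 0" using r_squared_plus_s_neg by simp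
  show "real m = (r^2 + r * s + r - s^2) / (r^2 + s)"
    using m_mult_denominator denom by (simp add: field_simps)
  show "real pair_meet = ((s + 1) * r) / (r^2 + s)"
    using pair_meet_mult_denominator denom by (simp add: field_simps)
  show "real triple_meet = (- (r^2) + r) / (r^2 + s)"
    using triple_meet_mult_denominator denom by (simp add: field_simps)
  obtain C0 where C0: "C0 \<in> F" using exists_two_members by blast
  obtain \<phi> where "bij_betw \<phi> C0 {..<m}"
    using ex_bij_betw_finite_nat[of C0] card_member[OF C0] by (auto simp: atLeast0LessThan)
  then show "\<exists>B. symmetric_design m pair_meet triple_meet B"
    using symmetric_design_image derived_design[OF C0] by blast
  obtain e :: int where e: "r = of_int e" using r_integral by blast
  obtain n :: nat where n: "s = - real n" using s_integral by blast
  have "real_of_int (int k * (e + 1)) = real_of_int ((- int n) * (- int n - e))"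
    using valency_relation unfolding e n by simp
  then have "int k * (e + 1) = (- int n) * (- int n - e)" by (simp only: of_int_eq_iff)
  moreover have "real_of_int (int triple_meet * (e^2 + - int n)) = real_of_int (e - e^2)"
    using triple_meet_mult_denominator unfolding e n by simp
  then have "int triple_meet * (e^2 + - int n) = e - e^2" by (simp only: of_int_eq_iff)
  ultimately show "\<exists>e::int. r = of_int e \<and> (e + 1) dvd (2 * int triple_meet + 4)"
    using e succ_dvd_design_parameter by blast
qed

end

lemma card_delsarte_coclique:
  fixes adj :: "'v::finite \<Rightarrow> 'v \<Rightarrow> bool"
  assumes "delsarte_coclique adj k em C" and "em < 0"
    and "real CARD('v) * em = real m * (em - real k)"
  shows "card C = m"
proof -
  have "real (card C) * (em - real k) = real CARD('v) * em"
    using assms(1,2) unfolding delsarte_coclique_def by (simp add: field_simps)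
  then show ?thesis using assms(2,3) by simp
qed

theorem theorem7p4:
  fixes adj :: "'v::finite \<Rightarrow> 'v \<Rightarrow> bool" and k :: nat and ep em :: real
  assumes srg: "strongly_regular adj k"
    and prim: "primitive adj"
    and eigs: "{e. is_eigenvalue (adj_matrix adj) e} = {real k, ep, em}"
    and order: "real k > ep" "ep > 0" "0 > em"
    and mult: "real CARD('v) * em = real (eig_multiplicity (adj_matrix adj) em) * (em - real k)"
    and cocl: "\<exists>F. card F = eig_multiplicity (adj_matrix adj) em + 1 \<and>
                   (\<forall>C\<in>F. delsarte_coclique adj k em C)"
  shows "\<exists>vt kt c :: nat.
           real vt = (ep^2 + ep * em + ep - em^2) / (ep^2 + em) \<and>
           real kt = ((em + 1) * ep) / (ep^2 + em) \<and>
           real c = (- (ep^2) + ep) / (ep^2 + em) \<and>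
           (\<exists>B. symmetric_design vt kt c B) \<and>
           (\<exists>e::int. ep = of_int e \<and> (e + 1) dvd (2 * int c + 4))"
proof -
  obtain lam mu where "strongly_regular_graph adj k lam mu"
    using srg unfolding strongly_regular_def simple_graph_def strongly_regular_graph_def by blast
  then interpret strongly_regular_graph adj k lam mu .
  interpret srg_eigenvalues adj k lam mu ep em
    using eigs order by (intro srg_eigenvalues_if_eigenvalues) auto
  define m where "m = eig_multiplicity (adj_matrix adj) em"
  obtain F where "card F = Suc m" and F: "\<forall>C\<in>F. delsarte_coclique adj k em C"
    using cocl unfolding m_def by auto
  moreover have "real m * (real k - em) = - real CARD('v) * em"
    using mult unfolding m_def by (simp add: algebra_simps)
  moreover have "card C = m" if "C \<in> F" for C
    using card_delsarte_coclique F that mult order(3) unfolding m_def by blast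
  ultimately interpret delsarte_family adj k lam mu ep em F m
    using F by unfold_locales
      (auto simp: m_def eig_multiplicity_def s_eigenspace_def delsarte_coclique_def)
  show ?thesis by (rule symmetric_design_with_parameters)
qed

end
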